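(* Fix an integer $d>1$. For every $\epsilon\in(0,1)$ there is $\rho_0$ such that for all $\rho>\rho_0$: if $p$ is a monic polynomial of degree $d$, $g=p\circ\exp$ satisfies $\operatorname{SV}(g)\subset\mathbb{D}_\rho(0)$, and $\alpha\in\mathbb{D}_{2\rho}(0)$ satisfies $\operatorname{dist}(\alpha,\operatorname{SV}(g))>\epsilon$, then every pair of distinct $w_1,w_2\in g^{-1}(\alpha)$ satisfies $|w_1-w_2|>(\epsilon/\rho)^{d^4}$.
   Context: $\mathcal{N}_d$ is the set of functions $p\circ\exp$ with $p$ a monic polynomial of degree $d$. $\operatorname{SV}(g)$ denotes the set of finite singular values (critical and asymptotic values) of $g$. $\operatorname{dist}$ is Euclidean distance. *)

theory Defs
  imports "HOL-Complex_Analysis.Complex_Analysis" "HOL-Computational_Algebra.Polynomial"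
begin

definition critical_values :: "(complex \<Rightarrow> complex) \<Rightarrow> complex set" where
  "critical_values f = {f z | z. deriv f z = 0}"

definition asymptotic_values :: "(complex \<Rightarrow> complex) \<Rightarrow> complex set" where
  "asymptotic_values f = {a. \<exists>\<gamma>::real \<Rightarrow> complex. continuous_on {0..} \<gamma> \<and>
       filterlim (\<lambda>t. norm (\<gamma> t)) at_top at_top \<and>
       ((\<lambda>t. f (\<gamma> t)) \<longlongrightarrow> a) at_top}"

definition SV :: "(complex \<Rightarrow> complex) \<Rightarrow> complex set" where
  "SV f = critical_values f \<union> asymptotic_values f"

end

theory Submission
  imports Defs "HOL-Computational_Algebra.Fundamental_Theorem_Algebra"
begin

text \<open>
  For monic \<open>p\<close> of degree \<open>d = n + 1\<close>, the polynomial \<open>p - p(0)\<close> is determined by its critical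
  points \<open>c\<^sub>0, \<dots>, c\<^sub>n\<^sub>-\<^sub>1\<close>. Its values at these points and at one further point \<open>u\<close> form a
  continuous function of \<open>(c, u)\<close>, homogeneous of degree \<open>d\<close>, which vanishes only at the origin
  (a polynomial all of whose critical points are roots has a single root). By compactness this
  function dominates \<open>\<kappa> max(|c\<^sub>j|, |u|)\<^sup>d\<close>. Since \<open>p(0)\<close> and the critical values of \<open>p\<close> are
  singular values of \<open>p \<circ> exp\<close>, all critical points and all solutions of \<open>p = \<alpha>\<close> then lie in a
  disc of radius \<open>O(\<rho>)\<close>.

  For two distinct roots \<open>u\<^sub>1, u\<^sub>2\<close> of \<open>f = p - \<alpha>\<close> the product of \<open>|f'|\<close> over all roots equals
  \<open>d\<^sup>d\<close> times the product of \<open>|f|\<close> over all critical points, which is at least \<open>d\<^sup>d \<epsilon>\<^sup>n\<close>; on the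
  other hand \<open>|f'(u\<^sub>1)|\<close> contains the factor \<open>|u\<^sub>1 - u\<^sub>2|\<close> and all other factors are \<open>O(\<rho>)\<close>.
  Hence \<open>|u\<^sub>1 - u\<^sub>2| \<ge> \<epsilon>\<^sup>n / O(\<rho>)^(d\<^sup>2)\<close>, and this lower bound passes to the logarithms \<open>w\<^sub>1, w\<^sub>2\<close>
  because \<open>exp\<close> is Lipschitz on bounded sets, or \<open>w\<^sub>1 - w\<^sub>2\<close> is a nonzero multiple of \<open>2\<pi>i\<close>.
\<close>

section \<open>The polynomial with prescribed critical points\<close>

text \<open>The antiderivative of \<open>(n+1) \<Prod>\<^sub>j\<^sub><\<^sub>n (X - x\<^sub>j)\<close> vanishing at \<open>0\<close>, with the product expanded into
  elementary symmetric functions so that the coefficients are visibly polynomial in \<open>x\<close>.\<close>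
definition crit_poly :: "nat \<Rightarrow> (nat \<Rightarrow> complex) \<Rightarrow> complex poly" where
  "crit_poly n x = (\<Sum>S\<in>Pow {..<n}.
     monom ((\<Prod>j\<in>S. - x j) * (of_nat (Suc n) / of_nat (Suc (n - card S)))) (Suc (n - card S)))"

lemma poly_crit_poly:
  "poly (crit_poly n x) v =
     (\<Sum>S\<in>Pow {..<n}. (\<Prod>j\<in>S. - x j) * (of_nat (Suc n) / of_nat (Suc (n - card S))) * v ^ Suc (n - card S))"
  by (simp add: crit_poly_def poly_sum poly_monom)

lemma poly_crit_poly_0 [simp]: "poly (crit_poly n x) 0 = 0"
  by (simp add: poly_crit_poly)

lemma poly_prod_linear:
  fixes x :: "'b \<Rightarrow> 'a::comm_ring_1"
  shows "poly (\<Prod>j\<in>A. [:- x j, 1:]) v = (\<Prod>j\<in>A. v - x j)"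
  unfolding poly_prod by (intro prod.cong refl) (simp add: algebra_simps)

lemma pderiv_crit_poly: "pderiv (crit_poly n x) = smult (of_nat (Suc n)) (\<Prod>j<n. [:- x j, 1:])"
proof (rule poly_eq_poly_eq_iff[THEN iffD1], rule ext)
  fix v :: complex
  have "DERIV (poly (crit_poly n x)) v :>
          (\<Sum>S\<in>Pow {..<n}. (\<Prod>j\<in>S. - x j) * of_nat (Suc n) * v ^ (n - card S))"
    unfolding poly_crit_poly[abs_def]
  proof (rule DERIV_sum)
    fix S
    show "DERIV (\<lambda>v. (\<Prod>j\<in>S. - x j) * (of_nat (Suc n) / of_nat (Suc (n - card S))) * v ^ Suc (n - card S)) v :>
            (\<Prod>j\<in>S. - x j) * of_nat (Suc n) * v ^ (n - card S)"
      by (rule derivative_eq_intros refl)+ (simp del: of_nat_Suc)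
  qed
  moreover have "(\<Sum>S\<in>Pow {..<n}. (\<Prod>j\<in>S. - x j) * of_nat (Suc n) * v ^ (n - card S)) =
                   of_nat (Suc n) * (\<Prod>j<n. v - x j)"
  proof -
    have "(\<Prod>j<n. v - x j) = (\<Prod>j<n. - x j + v)" by simp
    also have "\<dots> = (\<Sum>S\<in>Pow {..<n}. (\<Prod>j\<in>S. - x j) * (\<Prod>j\<in>{..<n}-S. v))"
      by (rule prod_add) simp
    also have "\<dots> = (\<Sum>S\<in>Pow {..<n}. (\<Prod>j\<in>S. - x j) * v ^ (n - card S))"
      by (intro sum.cong refl) (simp add: card_Diff_subset finite_subset)
    finally show ?thesis by (simp add: sum_distrib_left mult_ac)
  qed
  ultimately have "DERIV (poly (crit_poly n x)) v :> of_nat (Suc n) * (\<Prod>j<n. v - x j)"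
    by simp
  from DERIV_unique[OF poly_DERIV this]
  show "poly (pderiv (crit_poly n x)) v = poly (smult (of_nat (Suc n)) (\<Prod>j<n. [:- x j, 1:])) v"
    by (simp add: poly_prod_linear del: of_nat_Suc)
qed

lemma poly_crit_poly_homogeneous:
  "poly (crit_poly n (\<lambda>j. t * x j)) (t * v) = t ^ Suc n * poly (crit_poly n x) v"
  unfolding poly_crit_poly sum_distrib_left
proof (intro sum.cong refl)
  fix S assume S: "S \<in> Pow {..<n}"
  then have "finite S" "card S \<le> n"
    by (auto intro: finite_subset card_mono[of "{..<n}", simplified])
  have "(\<Prod>j\<in>S. - (t * x j)) = (\<Prod>j\<in>S. t * - x j)" by simp
  also have "\<dots> = t ^ card S * (\<Prod>j\<in>S. - x j)"
    by (simp only: prod.distrib) (simp add: \<open>finite S\<close>)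
  finally have "(\<Prod>j\<in>S. - (t * x j)) * (t * v) ^ Suc (n - card S) =
               (t ^ card S * t ^ Suc (n - card S)) * ((\<Prod>j\<in>S. - x j) * v ^ Suc (n - card S))"
    by (simp add: power_mult_distrib mult_ac)
  also have "t ^ card S * t ^ Suc (n - card S) = t ^ Suc n"
    using \<open>card S \<le> n\<close> by (simp flip: power_add)
  finally have eq: "(\<Prod>j\<in>S. - (t * x j)) * (t * v) ^ Suc (n - card S) =
               t ^ Suc n * ((\<Prod>j\<in>S. - x j) * v ^ Suc (n - card S))" .
  show "(\<Prod>j\<in>S. - (t * x j)) * (of_nat (Suc n) / of_nat (Suc (n - card S))) * (t * v) ^ Suc (n - card S) =
               t ^ Suc n * ((\<Prod>j\<in>S. - x j) * (of_nat (Suc n) / of_nat (Suc (n - card S))) * v ^ Suc (n - card S))"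
    using arg_cong[OF eq, of "\<lambda>z. z * (of_nat (Suc n) / of_nat (Suc (n - card S)))"]
    by (simp add: mult_ac)
qed

lemma crit_poly_cong: "(\<And>j. j < n \<Longrightarrow> x j = y j) \<Longrightarrow> crit_poly n x = crit_poly n y"
  unfolding crit_poly_def by (intro sum.cong refl arg_cong2[where f = monom] arg_cong2[where f = "(*)"] prod.cong) auto

lemma card_roots_eq_1_if_critical_points_are_roots:
  fixes P :: "complex poly"
  assumes P': "pderiv P \<noteq> 0" and roots: "\<And>z. poly (pderiv P) z = 0 \<Longrightarrow> poly P z = 0"
  shows "card {z. poly P z = 0} = 1"
proof -
  have P: "P \<noteq> 0" using P' by auto
  define T where "T = {z. poly P z = 0}"
  have "finite T" unfolding T_def using poly_roots_finite[OF P] .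
  have "degree (pderiv P) = (\<Sum>z | poly (pderiv P) z = 0. order z (pderiv P))"
    using size_proots_complex[of "pderiv P"] P' by (simp add: size_multiset_overloaded_eq)
  also have "\<dots> = (\<Sum>z\<in>T. order z (pderiv P))"
    by (rule sum.mono_neutral_left) (use \<open>finite T\<close> roots order_root P' in \<open>auto simp: T_def\<close>)
  finally have deg_P': "degree (pderiv P) = (\<Sum>z\<in>T. order z (pderiv P))" .
  have "degree P = (\<Sum>z\<in>T. order z P)"
    using size_proots_complex[of P] P by (simp add: size_multiset_overloaded_eq T_def)
  also have "\<dots> = (\<Sum>z\<in>T. Suc (order z (pderiv P)))"
    by (intro sum.cong refl) (use order_pderiv[OF P] in \<open>auto simp: T_def\<close>)
  also have "\<dots> = degree (pderiv P) + card T" using deg_P' by (simp only: sum_Suc)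
  finally have "degree P = degree P - 1 + card T" by (simp add: degree_pderiv)
  moreover have "degree P \<ge> 1" using P' pderiv_eq_0_iff by fastforce
  ultimately show ?thesis unfolding T_def by linarith
qed

lemma crit_poly_vanishing_at_all_points:
  assumes "\<And>j. j \<le> n \<Longrightarrow> poly (crit_poly n x) (x j) = 0" and "j \<le> n"
  shows "x j = 0"
proof -
  define P where "P = crit_poly n x"
  have "(\<Prod>j<n. [:- x j, 1:]) \<noteq> 0" by (simp add: prod_zero_iff)
  then have P': "pderiv P \<noteq> 0" by (simp add: P_def pderiv_crit_poly del: of_nat_Suc)
  have "poly P z = 0" if "poly (pderiv P) z = 0" for z
  proof -
    have "(\<Prod>j<n. z - x j) = 0"
      using that by (simp add: P_def pderiv_crit_poly poly_prod_linear del: of_nat_Suc)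
    then obtain j where "j < n" "z = x j" by (auto simp: prod_zero_iff)
    then show ?thesis using assms(1) by (simp add: P_def)
  qed
  then have "card {z. poly P z = 0} = 1"
    using P' by (rule card_roots_eq_1_if_critical_points_are_roots[rotated])
  moreover have "0 \<in> {z. poly P z = 0}" by (simp add: P_def)
  ultimately have "{z. poly P z = 0} = {0}" by (metis card_1_singletonE singletonD)
  then show ?thesis using assms by (auto simp: P_def)
qed

section \<open>A compactness bound\<close>

text \<open>The coordinates \<open>x\<^sub>0, \<dots>, x\<^sub>n\<^sub>-\<^sub>1\<close> are the critical points; \<open>x\<^sub>n\<close>, which \<open>crit_poly n x\<close> ignores,
  is the extra point \<open>u\<close>.\<close>
definition crit_gauge :: "nat \<Rightarrow> (nat \<Rightarrow> complex) \<Rightarrow> real" where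
  "crit_gauge n x = (\<Sum>j\<le>n. norm (poly (crit_poly n x) (x j)))"

lemma crit_gauge_nonneg: "crit_gauge n x \<ge> 0"
  by (simp add: crit_gauge_def sum_nonneg)

lemma crit_gauge_cong: "(\<And>j. j \<le> n \<Longrightarrow> x j = y j) \<Longrightarrow> crit_gauge n x = crit_gauge n y"
  unfolding crit_gauge_def by (simp add: crit_poly_cong[of n x y])

lemma crit_gauge_homogeneous: "crit_gauge n (\<lambda>j. t * x j) = norm t ^ Suc n * crit_gauge n x"
  by (simp add: crit_gauge_def poly_crit_poly_homogeneous norm_mult norm_power sum_distrib_left)

lemma crit_gauge_eq_0_iff: "crit_gauge n x = 0 \<longleftrightarrow> (\<forall>j\<le>n. x j = 0)"
proof
  assume "crit_gauge n x = 0"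
  then have "\<And>j. j \<le> n \<Longrightarrow> poly (crit_poly n x) (x j) = 0"
    by (simp add: crit_gauge_def sum_nonneg_eq_0_iff)
  then show "\<forall>j\<le>n. x j = 0" by (blast intro: crit_poly_vanishing_at_all_points)
next
  assume "\<forall>j\<le>n. x j = 0"
  then show "crit_gauge n x = 0" by (simp add: crit_gauge_def)
qed

lemma continuous_on_coordinate [continuous_intros]:
  "continuous_on S (\<lambda>x::nat \<Rightarrow> 'a::topological_space. x i)"
  by (rule continuous_on_subset[OF continuous_on_product_coordinates]) simp

lemma continuous_on_crit_gauge: "continuous_on S (crit_gauge n)"
  unfolding crit_gauge_def[abs_def] poly_crit_poly by (intro continuous_intros)

lemma crit_gauge_bounded_below_on_sphere:
  "\<exists>\<kappa>>0. \<forall>x. (\<forall>j. norm (x j) \<le> (if j \<le> n then 1 else 0)) \<and> (\<exists>j\<le>n. norm (x j) = 1) \<longrightarrow>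
     \<kappa> \<le> crit_gauge n x"
proof -
  define B :: "(nat \<Rightarrow> complex) set" where "B = PiE UNIV (\<lambda>j. if j \<le> n then cball 0 1 else {0})"
  define K where "K = B \<inter> (\<Union>j\<le>n. {x. norm (x j) = 1})"
  have "compactin (product_topology (\<lambda>i. euclidean) UNIV) B"
    unfolding B_def compactin_PiE by auto
  then have "compact B" by (simp add: euclidean_product_topology)
  have "closed (\<Union>j\<le>n. {x::nat \<Rightarrow> complex. norm (x j) = 1})"
    by (intro closed_UN finite_atMost ballI closed_Collect_eq continuous_intros)
  with \<open>compact B\<close> have "compact K" unfolding K_def by (rule compact_Int_closed)
  define e :: "nat \<Rightarrow> complex" where "e = (\<lambda>j. if j = 0 then 1 else 0)"
  have "e \<in> K" by (auto simp: K_def B_def e_def PiE_UNIV_domain)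
  then have "K \<noteq> {}" by blast
  obtain x0 where "x0 \<in> K" and min: "\<And>y. y \<in> K \<Longrightarrow> crit_gauge n x0 \<le> crit_gauge n y"
    using continuous_attains_inf[OF \<open>compact K\<close> \<open>K \<noteq> {}\<close> continuous_on_crit_gauge] by blast
  have "crit_gauge n x0 > 0"
  proof -
    obtain j where "j \<le> n" "norm (x0 j) = 1" using \<open>x0 \<in> K\<close> by (auto simp: K_def)
    then have "crit_gauge n x0 \<noteq> 0" by (auto simp: crit_gauge_eq_0_iff)
    then show ?thesis using crit_gauge_nonneg[of n x0] by linarith
  qed
  moreover have "x \<in> K" if "\<forall>j. norm (x j) \<le> (if j \<le> n then 1 else 0)" "\<exists>j\<le>n. norm (x j) = 1" for x
    using that by (auto simp: K_def B_def PiE_UNIV_domain split: if_splits)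
  ultimately show ?thesis using min by blast
qed

lemma crit_gauge_lower_bound: "\<exists>\<kappa>>0. \<forall>x j. j \<le> n \<longrightarrow> \<kappa> * norm (x j) ^ Suc n \<le> crit_gauge n x"
proof -
  obtain \<kappa> where \<kappa>: "\<kappa> > 0" and sphere: "\<And>y. (\<forall>j. norm (y j) \<le> (if j \<le> n then 1 else 0)) \<Longrightarrow>
      (\<exists>j\<le>n. norm (y j) = 1) \<Longrightarrow> \<kappa> \<le> crit_gauge n y"
    using crit_gauge_bounded_below_on_sphere[of n] by blast
  have "\<kappa> * norm (x j) ^ Suc n \<le> crit_gauge n x" if j: "j \<le> n" for x j
  proof -
    define m where "m = Max ((\<lambda>j. norm (x j)) ` {..n})"
    have le_m: "norm (x i) \<le> m" if "i \<le> n" for i unfolding m_def using that by (intro Max_ge) auto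
    have "m \<in> (\<lambda>j. norm (x j)) ` {..n}" unfolding m_def by (intro Max_in) auto
    then obtain j0 where j0: "j0 \<le> n" "norm (x j0) = m" by auto
    show ?thesis
    proof (cases "m = 0")
      case True
      then show ?thesis using le_m[OF j] crit_gauge_nonneg[of n x] by simp
    next
      case False
      then have "m > 0" using j0 by (metis norm_ge_zero less_eq_real_def)
      define y where "y = (\<lambda>i. if i \<le> n then x i / of_real m else 0)"
      have "\<kappa> \<le> crit_gauge n y"
        using le_m j0 \<open>m > 0\<close> by (intro sphere) (auto simp: y_def norm_divide intro!: exI[of _ j0])
      have "crit_gauge n x = crit_gauge n (\<lambda>i. of_real m * y i)"
        by (rule crit_gauge_cong) (use \<open>m > 0\<close> in \<open>simp add: y_def\<close>)
      also have "\<dots> = m ^ Suc n * crit_gauge n y"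
        using \<open>m > 0\<close> by (simp add: crit_gauge_homogeneous del: power_Suc)
      finally have "crit_gauge n x = m ^ Suc n * crit_gauge n y" .
      moreover have "\<kappa> * norm (x j) ^ Suc n \<le> \<kappa> * m ^ Suc n"
        using le_m[OF j] \<kappa> by (intro mult_left_mono power_mono) auto
      moreover have "\<kappa> * m ^ Suc n \<le> crit_gauge n y * m ^ Suc n"
        using \<open>\<kappa> \<le> crit_gauge n y\<close> \<open>m > 0\<close> by (intro mult_right_mono) auto
      ultimately show ?thesis by (simp only: mult.commute)
    qed
  qed
  then show ?thesis using \<kappa> by blast
qed

lemma monic_poly_linear_factors:
  fixes q :: "complex poly"
  assumes "lead_coeff q = 1"
  obtains r where "q = (\<Prod>j<degree q. [:- r j, 1:])"
proof -
  obtain rs where rs: "mset rs = proots q" using ex_mset by blast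
  have "length rs = degree q" using size_proots_complex[of q] rs by (metis size_mset)
  have "q = smult (lead_coeff q) (\<Prod>x\<in>#proots q. [:-x, 1:])"
    by (rule complex_poly_decompose_multiset[symmetric])
  also have "\<dots> = (\<Prod>x\<in>#mset rs. [:-x, 1:])" using assms rs by simp
  also have "\<dots> = prod_list (map (\<lambda>x. [:-x, 1:]) rs)"
    by (simp add: prod_mset_prod_list flip: mset_map)
  also have "\<dots> = (\<Prod>j<degree q. [:- (rs ! j), 1:])"
    using \<open>length rs = degree q\<close> by (simp add: prod.list_conv_set_nth atLeast0LessThan)
  finally show thesis by (rule that)
qed

lemma pderiv_monic_poly:
  fixes p :: "complex poly"
  assumes "lead_coeff p = 1" "degree p = Suc n"
  obtains c where "pderiv p = smult (of_nat (Suc n)) (\<Prod>j<n. [:- c j, 1:])"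
proof -
  have nz: "(of_nat (Suc n) :: complex) \<noteq> 0" by (simp only: of_nat_eq_0_iff)
  define q where "q = smult (1 / of_nat (Suc n)) (pderiv p)"
  have "degree (pderiv p) = n" using assms by (simp add: degree_pderiv)
  moreover have "lead_coeff (pderiv p) = of_nat (Suc n)"
    using assms calculation by (simp add: coeff_pderiv del: of_nat_Suc)
  ultimately have "lead_coeff q = 1" "degree q = n" using nz by (auto simp: q_def)
  then obtain c where "q = (\<Prod>j<n. [:- c j, 1:])" by (metis monic_poly_linear_factors)
  moreover have "pderiv p = smult (of_nat (Suc n)) q" using nz by (simp add: q_def)
  ultimately show thesis by (intro that) simp
qed

lemma poly_eq_poly_0_plus_crit_poly:
  assumes "pderiv p = smult (of_nat (Suc n)) (\<Prod>j<n. [:- x j, 1:])"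
  shows "poly p v = poly p 0 + poly (crit_poly n x) v"
proof -
  have "pderiv (p - crit_poly n x) = 0" using assms by (simp add: pderiv_diff pderiv_crit_poly)
  then obtain h where h: "p - crit_poly n x = [:h:]" using pderiv_iszero by blast
  from arg_cong[OF h, of "\<lambda>q. poly q 0"] have "h = poly p 0" by simp
  with arg_cong[OF h, of "\<lambda>q. poly q v"] show ?thesis by (simp add: algebra_simps)
qed

section \<open>Critical points and preimages lie in a disc of radius \<open>O(\<rho>)\<close>\<close>

lemma crit_gauge_point_bound:
  fixes p :: "complex poly"
  assumes \<kappa>: "\<forall>x j. j \<le> n \<longrightarrow> \<kappa> * norm (x j) ^ Suc n \<le> crit_gauge n x"
    and p: "lead_coeff p = 1" "degree p = Suc n"
    and crit: "\<And>c. poly (pderiv p) c = 0 \<Longrightarrow> norm (poly p c - poly p 0) \<le> A"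
    and z: "norm (poly p z - poly p 0) \<le> A"
  shows "\<kappa> * norm z ^ Suc n \<le> of_nat (Suc n) * A"
proof -
  obtain c where c: "pderiv p = smult (of_nat (Suc n)) (\<Prod>j<n. [:- c j, 1:])"
    using pderiv_monic_poly[OF p] .
  define x where "x = (\<lambda>j. if j < n then c j else z)"
  have "(\<Prod>j<n. [:- c j, 1:]) = (\<Prod>j<n. [:- x j, 1:])" by (intro prod.cong refl) (simp add: x_def)
  with c have poly_p: "poly (crit_poly n x) v = poly p v - poly p 0" for v
    using poly_eq_poly_0_plus_crit_poly[of p n x v] by simp
  have "norm (poly p (x j) - poly p 0) \<le> A" if "j \<le> n" for j
  proof (cases "j < n")
    case True
    then have "poly (pderiv p) (c j) = 0" by (auto simp: c poly_prod_linear prod_zero_iff simp del: of_nat_Suc)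
    then show ?thesis using True crit by (simp add: x_def)
  qed (simp add: x_def z)
  then have "crit_gauge n x \<le> (\<Sum>j\<le>n. A)" unfolding crit_gauge_def poly_p by (intro sum_mono) simp
  then show ?thesis using \<kappa>[rule_format, of n x] by (simp add: x_def)
qed

lemma le_mult_if_power_le:
  fixes z \<kappa> C \<rho> :: real
  assumes "\<kappa> > 0" "d \<ge> 1" "\<rho> \<ge> 1" "C \<ge> 0" "\<kappa> * z ^ d \<le> C * \<rho>"
  shows "z \<le> max 1 (C / \<kappa>) * \<rho>"
proof (cases "z \<le> 1")
  case True
  have "1 * 1 \<le> max 1 (C / \<kappa>) * \<rho>" using assms by (intro mult_mono) auto
  then show ?thesis using True by linarith
next
  case False
  then have "z \<le> z ^ d" using assms power_increasing[of 1 d z] by simp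
  also have "\<dots> \<le> C / \<kappa> * \<rho>" using assms by (simp add: field_simps)
  also have "\<dots> \<le> max 1 (C / \<kappa>) * \<rho>" using assms by (intro mult_right_mono) auto
  finally show ?thesis .
qed

lemma critical_points_and_preimages_bounded:
  fixes p :: "complex poly"
  assumes \<kappa>: "\<kappa> > 0" "\<forall>x j. j \<le> n \<longrightarrow> \<kappa> * norm (x j) ^ Suc n \<le> crit_gauge n x"
    and p: "lead_coeff p = 1" "degree p = Suc n"
    and \<rho>: "\<rho> \<ge> 1" "norm (poly p 0) < \<rho>" "\<And>c. poly (pderiv p) c = 0 \<Longrightarrow> norm (poly p c) < \<rho>"
    and \<alpha>: "norm \<alpha> < 2 * \<rho>"
    and z: "poly (pderiv p) z = 0 \<or> poly p z = \<alpha>"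
  shows "norm z \<le> max 1 (3 * real (Suc n) / \<kappa>) * \<rho>"
proof -
  have crit: "norm (poly p c - poly p 0) \<le> 3 * \<rho>" if "poly (pderiv p) c = 0" for c
    using \<rho>(1,2) \<rho>(3)[OF that] norm_triangle_ineq4[of "poly p c" "poly p 0"] by linarith
  have "norm (poly p z - poly p 0) \<le> 3 * \<rho>"
    using z crit \<alpha> \<rho>(2) norm_triangle_ineq4[of \<alpha> "poly p 0"] by auto
  then have "\<kappa> * norm z ^ Suc n \<le> (3 * real (Suc n)) * \<rho>"
    using crit_gauge_point_bound[OF \<kappa>(2) p crit] by (simp add: mult_ac)
  from le_mult_if_power_le[OF \<kappa>(1) _ \<rho>(1) _ this] show ?thesis by simp
qed

section \<open>Separation of the roots\<close>

lemma poly_pderiv_prod_linear_at_root: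
  fixes r :: "'b \<Rightarrow> 'a::idom"
  assumes "finite A" "i \<in> A"
  shows "poly (pderiv (\<Prod>j\<in>A. [:- r j, 1:])) (r i) = (\<Prod>j\<in>A-{i}. r i - r j)"
proof -
  have "poly (pderiv (\<Prod>j\<in>A. [:- r j, 1:])) (r i) = (\<Sum>a\<in>A. \<Prod>j\<in>A-{a}. r i - r j)"
    by (simp add: pderiv_prod pderiv_pCons poly_sum poly_prod_linear)
  also have "\<dots> = (\<Prod>j\<in>A-{i}. r i - r j) + (\<Sum>a\<in>A-{i}. \<Prod>j\<in>A-{a}. r i - r j)"
    by (rule sum.remove[OF assms])
  also have "(\<Sum>a\<in>A-{i}. \<Prod>j\<in>A-{a}. r i - r j) = 0"
    using assms by (intro sum.neutral ballI) (auto simp: prod_zero_iff)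
  finally show ?thesis by simp
qed

lemma prod_norm_pderiv_at_roots:
  fixes f :: "complex poly"
  assumes f: "f = (\<Prod>i<Suc n. [:- r i, 1:])"
    and f': "pderiv f = smult (of_nat (Suc n)) (\<Prod>j<n. [:- c j, 1:])"
  shows "(\<Prod>i<Suc n. norm (poly (pderiv f) (r i))) = real (Suc n) ^ Suc n * (\<Prod>j<n. norm (poly f (c j)))"
proof -
  have "(\<Prod>i<Suc n. norm (poly (pderiv f) (r i))) = (\<Prod>i<Suc n. real (Suc n) * (\<Prod>j<n. norm (r i - c j)))"
    by (simp add: f' poly_prod_linear norm_mult prod_norm del: of_nat_Suc)
  also have "\<dots> = real (Suc n) ^ Suc n * (\<Prod>i<Suc n. \<Prod>j<n. norm (r i - c j))"
    by (simp add: prod.distrib del: of_nat_Suc)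
  also have "(\<Prod>i<Suc n. \<Prod>j<n. norm (r i - c j)) = (\<Prod>j<n. \<Prod>i<Suc n. norm (c j - r i))"
    by (subst prod.swap) (simp add: norm_minus_commute)
  also have "\<dots> = (\<Prod>j<n. norm (poly f (c j)))"
    by (simp only: f poly_prod_linear prod_norm)
  finally show ?thesis .
qed

lemma norm_pderiv_at_root_le:
  fixes r :: "nat \<Rightarrow> complex"
  assumes i: "i1 < d" "i2 < d" "i1 \<noteq> i2" and M: "\<And>i. i < d \<Longrightarrow> norm (r i) \<le> M"
  shows "norm (poly (pderiv (\<Prod>i<d. [:- r i, 1:])) (r i1)) \<le> norm (r i1 - r i2) * (2 * M) ^ (d - 2)"
proof -
  have "norm (poly (pderiv (\<Prod>i<d. [:- r i, 1:])) (r i1)) = (\<Prod>i\<in>{..<d}-{i1}. norm (r i1 - r i))"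
    using i by (simp add: poly_pderiv_prod_linear_at_root prod_norm)
  also have "\<dots> = norm (r i1 - r i2) * (\<Prod>i\<in>{..<d}-{i1}-{i2}. norm (r i1 - r i))"
    using i by (subst prod.remove[of _ i2]) auto
  also have "(\<Prod>i\<in>{..<d}-{i1}-{i2}. norm (r i1 - r i)) \<le> (\<Prod>i\<in>{..<d}-{i1}-{i2}. 2 * M)"
  proof (intro prod_mono conjI norm_ge_zero)
    fix i assume "i \<in> {..<d}-{i1}-{i2}"
    then show "norm (r i1 - r i) \<le> 2 * M"
      using M[of i] M[OF i(1)] norm_triangle_ineq4[of "r i1" "r i"] by auto
  qed
  also have "(\<Prod>i\<in>{..<d}-{i1}-{i2}. 2 * M) = (2 * M) ^ (d - 2)"
    using i by (simp add: card_Diff_subset numeral_2_eq_2)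
  finally show ?thesis by (simp add: mult_left_mono)
qed

lemma prod_norm_pderiv_at_roots_le:
  fixes f :: "complex poly"
  assumes f: "f = (\<Prod>i<Suc n. [:- r i, 1:])"
    and f': "pderiv f = smult (of_nat (Suc n)) (\<Prod>j<n. [:- c j, 1:])"
    and M: "\<And>i. i < Suc n \<Longrightarrow> norm (r i) \<le> M" "\<And>j. j < n \<Longrightarrow> norm (c j) \<le> M"
    and i: "i1 < Suc n" "i2 < Suc n" "i1 \<noteq> i2"
  shows "(\<Prod>i<Suc n. norm (poly (pderiv f) (r i))) \<le>
           norm (r i1 - r i2) * (2 * M) ^ (n - 1) * (real (Suc n) * (2 * M) ^ n) ^ n"
proof -
  have bound: "norm (poly (pderiv f) (r i)) \<le> real (Suc n) * (2 * M) ^ n" if i: "i < Suc n" for i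
  proof -
    have "(\<Prod>j<n. norm (r i - c j)) \<le> (\<Prod>j<n. 2 * M)"
    proof (intro prod_mono conjI norm_ge_zero)
      fix j assume "j \<in> {..<n}"
      then show "norm (r i - c j) \<le> 2 * M"
        using M(1)[OF i] M(2)[of j] norm_triangle_ineq4[of "r i" "c j"] by simp
    qed
    then show ?thesis by (simp add: f' poly_prod_linear norm_mult prod_norm mult_left_mono del: of_nat_Suc)
  qed
  have "(\<Prod>i<Suc n. norm (poly (pderiv f) (r i))) =
          norm (poly (pderiv f) (r i1)) * (\<Prod>i\<in>{..<Suc n}-{i1}. norm (poly (pderiv f) (r i)))"
    using i by (subst prod.remove[of _ i1]) auto
  also have "\<dots> \<le> (norm (r i1 - r i2) * (2 * M) ^ (n - 1)) * (\<Prod>i\<in>{..<Suc n}-{i1}. real (Suc n) * (2 * M) ^ n)"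
  proof (intro mult_mono prod_mono conjI norm_ge_zero prod_nonneg)
    show "norm (poly (pderiv f) (r i1)) \<le> norm (r i1 - r i2) * (2 * M) ^ (n - 1)"
      using norm_pderiv_at_root_le[OF i M(1)] unfolding f
      by (simp only: numeral_2_eq_2 diff_Suc_Suc One_nat_def)
    have "0 \<le> M" using M(1)[of 0] norm_ge_zero[of "r 0"] by linarith
    then show "0 \<le> norm (r i1 - r i2) * (2 * M) ^ (n - 1)" by simp
  qed (use bound in auto)
  also have "(\<Prod>i\<in>{..<Suc n}-{i1}. real (Suc n) * (2 * M) ^ n) = (real (Suc n) * (2 * M) ^ n) ^ n"
    using i by (simp add: card_Diff_subset)
  finally show ?thesis .
qed

lemma root_separation:
  fixes p :: "complex poly"
  assumes p: "lead_coeff p = 1" "degree p = Suc n"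
    and crit: "\<And>c. poly (pderiv p) c = 0 \<Longrightarrow> \<epsilon> < norm (poly p c - \<alpha>) \<and> norm c \<le> M"
    and roots: "\<And>z. poly p z = \<alpha> \<Longrightarrow> norm z \<le> M"
    and u: "poly p u1 = \<alpha>" "poly p u2 = \<alpha>" "u1 \<noteq> u2"
    and "0 \<le> \<epsilon>" "1 \<le> 2 * M"
  shows "\<epsilon> ^ n \<le> norm (u1 - u2) * (2 * M) ^ (Suc n * Suc n)"
proof -
  define f where "f = p + [:- \<alpha>:]"
  have "degree f = Suc n" using p by (simp add: f_def degree_add_eq_left)
  then have "lead_coeff f = 1" using p by (simp add: f_def)
  then obtain r where "f = (\<Prod>i<degree f. [:- r i, 1:])" by (rule monic_poly_linear_factors)
  with \<open>degree f = Suc n\<close> have f: "f = (\<Prod>i<Suc n. [:- r i, 1:])" by simp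
  obtain c where c: "pderiv p = smult (of_nat (Suc n)) (\<Prod>j<n. [:- c j, 1:])"
    using pderiv_monic_poly[OF p] .
  have f': "pderiv f = pderiv p" by (simp add: f_def pderiv_add)
  have roots_f: "poly p z = \<alpha> \<longleftrightarrow> (\<exists>i<Suc n. z = r i)" for z
  proof -
    have "poly p z = \<alpha> \<longleftrightarrow> poly f z = 0" by (simp add: f_def)
    also have "\<dots> \<longleftrightarrow> (\<exists>i<Suc n. z = r i)" unfolding f poly_prod_linear
      by (simp only: prod_zero_iff[OF finite_lessThan] lessThan_iff right_minus_eq Bex_def)
    finally show ?thesis .
  qed
  have crit_c: "poly (pderiv p) (c j) = 0" if "j < n" for j
    using that by (auto simp: c poly_prod_linear prod_zero_iff simp del: of_nat_Suc)
  obtain i1 i2 where i: "i1 < Suc n" "i2 < Suc n" "u1 = r i1" "u2 = r i2"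
    using u roots_f by metis
  with u have "i1 \<noteq> i2" by auto
  have rM: "norm (r i) \<le> M" if "i < Suc n" for i using that roots roots_f by blast
  have cM: "norm (c j) \<le> M" if "j < n" for j using crit[OF crit_c[OF that]] by blast
  have "real (Suc n) ^ Suc n * \<epsilon> ^ n = real (Suc n) ^ Suc n * (\<Prod>j<n. \<epsilon>)" by simp
  also have "\<dots> \<le> real (Suc n) ^ Suc n * (\<Prod>j<n. norm (poly f (c j)))"
    using crit[OF crit_c] \<open>0 \<le> \<epsilon>\<close> by (intro mult_left_mono prod_mono) (auto simp: f_def less_imp_le)
  also have "\<dots> = (\<Prod>i<Suc n. norm (poly (pderiv f) (r i)))"
    using prod_norm_pderiv_at_roots[OF f c[folded f']] ..
  also have "\<dots> \<le> norm (u1 - u2) * (2 * M) ^ (n - 1) * (real (Suc n) * (2 * M) ^ n) ^ n"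
    using prod_norm_pderiv_at_roots_le[OF f c[folded f'] rM cM i(1,2) \<open>i1 \<noteq> i2\<close>] i(3,4) by simp
  also have "\<dots> = real (Suc n) ^ n * (norm (u1 - u2) * (2 * M) ^ (n - 1 + n * n))"
    by (simp add: power_mult_distrib power_add power_mult mult_ac)
  finally have "real (Suc n) * \<epsilon> ^ n \<le> norm (u1 - u2) * (2 * M) ^ (n - 1 + n * n)"
    by (simp add: mult_ac del: of_nat_Suc)
  moreover have "\<epsilon> ^ n \<le> real (Suc n) * \<epsilon> ^ n" using \<open>0 \<le> \<epsilon>\<close> by (simp add: ring_distribs)
  moreover have "(2 * M) ^ (n - 1 + n * n) \<le> (2 * M) ^ (Suc n * Suc n)"
    using \<open>1 \<le> 2 * M\<close> by (intro power_increasing) auto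
  ultimately show ?thesis by (smt (verit) mult_left_mono norm_ge_zero)
qed

section \<open>Singular values of \<open>p \<circ> exp\<close>\<close>

lemma poly_0_in_SV_poly_exp: "poly p 0 \<in> SV (\<lambda>z. poly p (exp z))"
proof -
  define \<gamma> :: "real \<Rightarrow> complex" where "\<gamma> = (\<lambda>t. complex_of_real (- t))"
  have "continuous_on {0..} \<gamma>" unfolding \<gamma>_def by (intro continuous_intros)
  moreover have "filterlim (\<lambda>t. norm (\<gamma> t)) at_top at_top"
  proof (rule filterlim_cong[THEN iffD1, OF refl refl _ filterlim_ident])
    show "\<forall>\<^sub>F t in at_top. t = norm (\<gamma> t)"
      unfolding \<gamma>_def using eventually_ge_at_top[of "0::real"] by eventually_elim auto
  qed
  moreover have "((\<lambda>t. poly p (exp (\<gamma> t))) \<longlongrightarrow> poly p 0) at_top"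
  proof (intro tendsto_intros)
    have "((\<lambda>t. exp (- t)) \<longlongrightarrow> (0::real)) at_top"
      by (rule filterlim_compose[OF exp_at_bot filterlim_uminus_at_bot_at_top])
    then have "((\<lambda>t. complex_of_real (exp (- t))) \<longlongrightarrow> complex_of_real 0) at_top"
      by (intro tendsto_intros)
    then show "((\<lambda>t. exp (\<gamma> t)) \<longlongrightarrow> 0) at_top" unfolding \<gamma>_def by (simp flip: exp_of_real)
  qed
  ultimately have "poly p 0 \<in> asymptotic_values (\<lambda>z. poly p (exp z))"
    unfolding asymptotic_values_def by blast
  then show ?thesis unfolding SV_def by blast
qed

lemma critical_value_in_SV_poly_exp:
  assumes "poly (pderiv p) c = 0"
  shows "poly p c \<in> SV (\<lambda>z. poly p (exp z))"
proof (cases "c = 0")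
  case True
  then show ?thesis using poly_0_in_SV_poly_exp by simp
next
  case False
  then have "exp (Ln c) = c" by simp
  have "DERIV (\<lambda>z. poly p (exp z)) (Ln c) :> poly (pderiv p) (exp (Ln c)) * exp (Ln c)"
    by (rule DERIV_chain'[OF DERIV_exp poly_DERIV])
  then have "deriv (\<lambda>z. poly p (exp z)) (Ln c) = 0"
    using assms \<open>exp (Ln c) = c\<close> by (simp add: DERIV_imp_deriv)
  then have "poly p c \<in> critical_values (\<lambda>z. poly p (exp z))"
    unfolding critical_values_def using \<open>exp (Ln c) = c\<close> by force
  then show ?thesis unfolding SV_def by blast
qed

section \<open>From the roots of \<open>p - \<alpha>\<close> to their logarithms\<close>

lemma exp_eq_imp_norm_diff_ge_2pi:
  fixes w1 w2 :: complex
  assumes "exp w1 = exp w2" "w1 \<noteq> w2"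
  shows "norm (w1 - w2) \<ge> 2 * pi"
proof -
  obtain m :: int where m: "w1 = w2 + complex_of_real (real_of_int (2 * m) * pi) * \<i>" using assms(1) by (auto simp: exp_eq)
  with assms(2) have "m \<noteq> 0" by auto
  then have "1 \<le> \<bar>real_of_int m\<bar>" by linarith
  moreover have "norm (w1 - w2) = 2 * pi * \<bar>real_of_int m\<bar>" using m by (simp add: norm_mult)
  ultimately show ?thesis using pi_gt3 by simp
qed

lemma log_separation:
  fixes w1 w2 :: complex and M \<eta> :: real
  assumes "w1 \<noteq> w2" "norm (exp w2) \<le> M" "1 \<le> 2 * M"
    and sep: "exp w1 \<noteq> exp w2 \<Longrightarrow> \<eta> \<le> norm (exp w1 - exp w2) * (2 * M) ^ m"
  shows "min (1 / 2) (\<eta> / (2 * M) ^ Suc m) \<le> norm (w1 - w2)"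
proof (cases "exp w1 = exp w2 \<or> norm (w1 - w2) > 1 / 2")
  case True
  then have "1 / 2 \<le> norm (w1 - w2)"
    using exp_eq_imp_norm_diff_ge_2pi[OF _ \<open>w1 \<noteq> w2\<close>] pi_gt3 by auto
  then show ?thesis by linarith
next
  case False
  have "norm (exp (w1 - w2) - 1) \<le> 3 / 2 * norm (w1 - w2)"
    using norm_exp_bounds(2)[of "w1 - w2"] False by simp
  then have "norm (exp w2) * norm (exp (w1 - w2) - 1) \<le> M * (3 / 2 * norm (w1 - w2))"
    using assms(2,3) by (intro mult_mono) auto
  moreover have "exp w1 - exp w2 = exp w2 * (exp (w1 - w2) - 1)" by (simp add: exp_diff field_simps)
  ultimately have "norm (exp w1 - exp w2) \<le> M * (3 / 2 * norm (w1 - w2))"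
    by (simp only: norm_mult)
  also have "\<dots> \<le> 2 * M * norm (w1 - w2)" using assms(3) by (simp add: mult_right_mono)
  finally have "\<eta> \<le> 2 * M * norm (w1 - w2) * (2 * M) ^ m"
    using sep False assms(3) by (smt (verit) mult_right_mono zero_le_power)
  then have "\<eta> / (2 * M) ^ Suc m \<le> norm (w1 - w2)"
    using assms(3) by (simp add: divide_le_eq mult_ac)
  then show ?thesis by linarith
qed

lemma separation_exponent_bound:
  fixes \<epsilon> \<rho> B h :: real
  assumes \<epsilon>: "0 < \<epsilon>" "\<epsilon> < 1" and "1 \<le> B" "(2 * B) ^ k + 2 < \<rho>" "n \<le> D" "k < D"
    and h: "min (1 / 2) (\<epsilon> ^ n / (2 * (B * \<rho>)) ^ k) \<le> h"
  shows "(\<epsilon> / \<rho>) ^ D < h"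
proof -
  have "(2 * B) ^ k \<ge> 0" using \<open>1 \<le> B\<close> by simp
  then have "\<rho> > 2" using assms(4) by linarith
  have "(\<epsilon> / \<rho>) ^ D \<le> \<epsilon> / \<rho>"
    using \<epsilon> \<open>\<rho> > 2\<close> \<open>k < D\<close> power_decreasing[of 1 D "\<epsilon> / \<rho>"] by simp
  also have "\<dots> < 1 / 2" using \<epsilon> \<open>\<rho> > 2\<close> by (simp add: field_simps)
  finally have "(\<epsilon> / \<rho>) ^ D < 1 / 2" .
  have "(2 * (B * \<rho>)) ^ k = (2 * B) ^ k * \<rho> ^ k" by (simp add: power_mult_distrib mult_ac)
  also have "\<dots> < \<rho> * \<rho> ^ k" using assms(4) \<open>\<rho> > 2\<close> by (intro mult_strict_right_mono) auto
  also have "\<dots> \<le> \<rho> ^ D" using \<open>k < D\<close> \<open>\<rho> > 2\<close> power_increasing[of "Suc k" D \<rho>] by simp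
  finally have "(2 * (B * \<rho>)) ^ k < \<rho> ^ D" .
  have "(\<epsilon> / \<rho>) ^ D = \<epsilon> ^ D / \<rho> ^ D" by (simp add: power_divide)
  also have "\<dots> \<le> \<epsilon> ^ n / \<rho> ^ D"
    using \<epsilon> \<open>\<rho> > 2\<close> \<open>n \<le> D\<close> by (intro divide_right_mono power_decreasing) auto
  also have "\<dots> < \<epsilon> ^ n / (2 * (B * \<rho>)) ^ k"
    using \<open>(2 * (B * \<rho>)) ^ k < \<rho> ^ D\<close> \<epsilon> \<open>1 \<le> B\<close> \<open>\<rho> > 2\<close> by (intro divide_strict_left_mono) auto
  finally show ?thesis using \<open>(\<epsilon> / \<rho>) ^ D < 1 / 2\<close> h by linarith
qed

lemma log_preimages_separated:
  fixes p :: "complex poly" and \<alpha> w1 w2 :: complex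
  assumes \<kappa>: "\<kappa> > 0" "\<forall>x j. j \<le> n \<longrightarrow> \<kappa> * norm (x j) ^ Suc n \<le> crit_gauge n x"
    and B: "B = max 1 (3 * real (Suc n) / \<kappa>)"
    and p: "lead_coeff p = 1" "degree p = Suc n"
    and \<rho>: "1 \<le> \<rho>" "SV (\<lambda>z. poly p (exp z)) \<subseteq> ball 0 \<rho>"
    and \<alpha>: "\<alpha> \<in> ball 0 (2 * \<rho>)" "infdist \<alpha> (SV (\<lambda>z. poly p (exp z))) > \<epsilon>" "0 \<le> \<epsilon>"
    and w: "poly p (exp w1) = \<alpha>" "poly p (exp w2) = \<alpha>" "w1 \<noteq> w2"
  shows "min (1 / 2) (\<epsilon> ^ n / (2 * (B * \<rho>)) ^ Suc (Suc n * Suc n)) \<le> norm (w1 - w2)"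
proof -
  have "1 \<le> B" by (simp add: B)
  with \<rho>(1) have BM: "1 \<le> 2 * (B * \<rho>)" using mult_mono[of 1 B 1 \<rho>] by simp
  have SV_bound: "norm s < \<rho> \<and> \<epsilon> < norm (s - \<alpha>)" if "s \<in> SV (\<lambda>z. poly p (exp z))" for s
    using \<rho>(2) that \<alpha>(2) infdist_le[OF that, of \<alpha>] by (auto simp: dist_norm norm_minus_commute)
  note crit = SV_bound[OF critical_value_in_SV_poly_exp]
  have bounded: "norm z \<le> B * \<rho>" if "poly (pderiv p) z = 0 \<or> poly p z = \<alpha>" for z
    unfolding B
  proof (rule critical_points_and_preimages_bounded[OF \<kappa> p \<rho>(1) _ _ _ that])
    show "norm (poly p 0) < \<rho>" using SV_bound[OF poly_0_in_SV_poly_exp] by blast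
  qed (use crit \<alpha>(1) in auto)
  have "\<epsilon> ^ n \<le> norm (exp w1 - exp w2) * (2 * (B * \<rho>)) ^ (Suc n * Suc n)" if "exp w1 \<noteq> exp w2"
    by (rule root_separation[OF p _ _ w(1,2) that]) (use crit bounded \<alpha>(3) BM in auto)
  then show ?thesis using log_separation[OF w(3) bounded BM] w(2) by blast
qed

theorem lemmaA4:
  fixes d :: nat
  assumes "d > 1"
  shows "\<forall>\<epsilon>::real. 0 < \<epsilon> \<and> \<epsilon> < 1 \<longrightarrow>
    (\<exists>\<rho>0::real. \<forall>\<rho>>\<rho>0. \<forall>(p::complex poly) (\<alpha>::complex) w1 w2.
       lead_coeff p = 1 \<longrightarrow> degree p = d \<longrightarrow>
       SV (\<lambda>z. poly p (exp z)) \<subseteq> ball 0 \<rho> \<longrightarrow>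
       \<alpha> \<in> ball 0 (2 * \<rho>) \<longrightarrow>
       infdist \<alpha> (SV (\<lambda>z. poly p (exp z))) > \<epsilon> \<longrightarrow>
       poly p (exp w1) = \<alpha> \<longrightarrow> poly p (exp w2) = \<alpha> \<longrightarrow> w1 \<noteq> w2 \<longrightarrow>
       cmod (w1 - w2) > (\<epsilon> / \<rho>) ^ (d ^ 4))"
proof -
  obtain n where d: "d = Suc n" using assms by (cases d) auto
  obtain \<kappa> where \<kappa>: "\<kappa> > 0" "\<forall>x j. j \<le> n \<longrightarrow> \<kappa> * norm (x j) ^ Suc n \<le> crit_gauge n x"
    using crit_gauge_lower_bound by blast
  define B where "B = max 1 (3 * real (Suc n) / \<kappa>)"
  define D where "D = Suc n * Suc n"
  have "4 \<le> D" unfolding D_def using assms d mult_le_mono[of 2 "Suc n" 2 "Suc n"] by simp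
  moreover have "d ^ 4 = D * D" by (simp only: d D_def power4_eq_xxxx mult.assoc)
  ultimately have exponents: "n \<le> d ^ 4" "Suc D < d ^ 4"
    using mult_le_mono1[of 4 D D] by (auto simp: D_def)
  have "1 \<le> B" by (simp add: B_def)
  have "(\<epsilon> / \<rho>) ^ (d ^ 4) < norm (w1 - w2)"
    if "0 < \<epsilon>" "\<epsilon> < 1" "(2 * B) ^ Suc D + 2 < \<rho>" "lead_coeff p = 1" "degree p = d"
      "SV (\<lambda>z. poly p (exp z)) \<subseteq> ball 0 \<rho>" "\<alpha> \<in> ball 0 (2 * \<rho>)"
      "infdist \<alpha> (SV (\<lambda>z. poly p (exp z))) > \<epsilon>"
      "poly p (exp w1) = \<alpha>" "poly p (exp w2) = \<alpha>" "w1 \<noteq> w2"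
    for \<epsilon> \<rho> p \<alpha> w1 w2
  proof -
    have "(2 * B) ^ Suc D \<ge> 0" using \<open>1 \<le> B\<close> by simp
    then have "1 \<le> \<rho>" using that(3) by linarith
    have "min (1 / 2) (\<epsilon> ^ n / (2 * (B * \<rho>)) ^ Suc D) \<le> norm (w1 - w2)"
      unfolding D_def using that \<open>1 \<le> \<rho>\<close> by (intro log_preimages_separated[OF \<kappa> B_def]) (auto simp: d)
    then show ?thesis by (rule separation_exponent_bound[OF that(1,2) \<open>1 \<le> B\<close> that(3) exponents])
  qed
  then show ?thesis by (intro allI impI exI[of _ "(2 * B) ^ Suc D + 2"]) auto
qed

end
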